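(* Let $r\in\mathbb N$, $1<q<\infty$ and $t=r^{1/q}$. Then $K^{\mathcal M}_{q,r}=\mathcal N_t^{(q)}$.
   Context: $c_{00}$ denotes finitely supported real sequences and $(e_n)$ the unit vectors. $K^{\mathcal M}_{q,r}$ is the smallest subset of $c_{00}$ that contains all vectors $\pm e_n$ and has the property: whenever $y_1,\dots,y_l\in K^{\mathcal M}_{q,r}$ with $l\le r$ and pairwise disjoint supports, then $r^{-1/q}(y_1+\dots+y_l)\in K^{\mathcal M}_{q,r}$. For $\alpha>0$ let $C_\alpha=\{\pm\alpha^j: j\in\mathbb Z\}\cup\{0\}$, $\mathcal N_\alpha=\{x\in c_{00}: x(i)\in C_\alpha \text{ for all } i\}$, and $\mathcal N_\alpha^{(q)}=\mathcal N_\alpha\cap B_{\ell_q}$, where $B_{\ell_q}$ is the closed unit ball of $\ell_q$. *)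

theory Defs
  imports Complex_Main
begin

definition supp :: "(nat \<Rightarrow> real) \<Rightarrow> nat set" where
  "supp x = {i. x i \<noteq> 0}"

definition c00 :: "(nat \<Rightarrow> real) set" where
  "c00 = {x. finite (supp x)}"

definition unitvec :: "nat \<Rightarrow> nat \<Rightarrow> real" where
  "unitvec n = (\<lambda>i. if i = n then 1 else 0)"

definition disjoint_supps :: "(nat \<Rightarrow> real) list \<Rightarrow> bool" where
  "disjoint_supps ys \<longleftrightarrow>
     (\<forall>i j. i < length ys \<longrightarrow> j < length ys \<longrightarrow> i \<noteq> j \<longrightarrow> supp (ys ! i) \<inter> supp (ys ! j) = {})"

inductive_set KM :: "real \<Rightarrow> nat \<Rightarrow> (nat \<Rightarrow> real) set" for q :: real and r :: nat where
  pos_unit: "unitvec n \<in> KM q r"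
| neg_unit: "(\<lambda>i. - unitvec n i) \<in> KM q r"
| comb: "\<lbrakk> ys \<in> lists (KM q r); length ys \<le> r; disjoint_supps ys \<rbrakk>
          \<Longrightarrow> (\<lambda>i. r powr (-1/q) * (\<Sum>y\<leftarrow>ys. y i)) \<in> KM q r"

definition Cset :: "real \<Rightarrow> real set" where
  "Cset \<alpha> = {y. \<exists>j::int. y = \<alpha> powi j \<or> y = - (\<alpha> powi j)} \<union> {0}"

definition Nset :: "real \<Rightarrow> (nat \<Rightarrow> real) set" where
  "Nset \<alpha> = {x \<in> c00. \<forall>i. x i \<in> Cset \<alpha>}"

definition lq_norm :: "real \<Rightarrow> (nat \<Rightarrow> real) \<Rightarrow> real" where
  "lq_norm q x = (\<Sum>i\<in>supp x. \<bar>x i\<bar> powr q) powr (1 / q)"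

definition Nset_q :: "real \<Rightarrow> real \<Rightarrow> (nat \<Rightarrow> real) set" where
  "Nset_q \<alpha> q = Nset \<alpha> \<inter> {x. lq_norm q x \<le> 1}"

end

theory Submission
  imports Defs
begin

text \<open>
  Write t = r powr (1/q), so that r powr (-1/q) = 1/t and (1/t) powr q = 1/r.

  K is contained in N: the generators lie in N; a combination step divides all entries by t,
  which preserves C_t, and as the supports are disjoint the masses \<Sum> |x i| powr q add up,
  so the new mass is at most l/r \<le> 1.

  N is contained in K: the nonzero entries of x in N have modulus at most 1, hence are
  \<plusminus>t^(-k) with k \<ge> 0, and we induct on the largest k. If some entry is \<plusminus>1, then x = \<plusminus>e_n.
  Otherwise all k \<ge> 1 and the weights |x i| powr q = r^(-k) sum to at most 1; being powers
  of 1/r, they can be coloured with r colours so that every colour class has weight at most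
  1/r. Multiplying the colour classes by t gives r disjointly supported elements of N with
  smaller largest exponent, and x is 1/t times their sum.
\<close>

lemma bin_with_room_exists:
  fixes L :: "nat \<Rightarrow> nat" and a C c :: nat
  assumes "0 < a" and "a dvd C" and "\<And>j. j < c \<Longrightarrow> a dvd L j"
    and "\<And>j. j < c \<Longrightarrow> L j \<le> C" and "(\<Sum>j<c. L j) + a \<le> c * C"
  shows "\<exists>j<c. L j + a \<le> C"
proof (rule ccontr)
  assume no_room: "\<not> (\<exists>j<c. L j + a \<le> C)"
  have "L j = C" if "j < c" for j
  proof -
    have "a dvd C - L j" using assms(2) assms(3)[OF that] by (rule dvd_diff_nat)
    moreover have "C < L j + a" using no_room that by auto
    then have "C - L j < a" using assms(1) by arith
    ultimately have "C - L j = 0" using dvd_imp_le not_le by blast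
    then show ?thesis using assms(4)[OF that] by simp
  qed
  then have "(\<Sum>j<c. L j) = c * C" by simp
  with assms(1,5) show False by linarith
qed

text \<open>Items are placed largest first (the induction order). When an item of size a is
  placed, every bin load is a multiple of a, so some bin still has room for it unless all
  bins are full, which the bound on the total size excludes.\<close>
lemma bin_packing_dvd_chain:
  fixes a :: "'a \<Rightarrow> nat" and C c :: nat
  assumes "finite S" and "\<forall>i\<in>S. 0 < a i" and "\<forall>i\<in>S. \<forall>j\<in>S. a i dvd a j \<or> a j dvd a i"
    and "\<forall>i\<in>S. a i dvd C" and "sum a S \<le> c * C"
  shows "\<exists>g. (\<forall>i\<in>S. g i < c) \<and> (\<forall>j<c. sum a {i\<in>S. g i = j} \<le> C)"
  using assms
proof (induction S rule: finite_ranking_induct[where f = "\<lambda>i. - int (a i)"])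
  case empty
  then show ?case by auto
next
  case (insert x S)
  show ?case
  proof (cases "x \<in> S")
    case True
    with insert show ?thesis by (simp add: insert_absorb)
  next
    case x_new: False
    have ax_pos: "0 < a x" and ax_dvd_C: "a x dvd C" using insert.prems by auto
    have ax_dvd: "a x dvd a y" if "y \<in> S" for y
      using insert.hyps(2)[OF that] insert.prems(2) that ax_pos
      by (metis dvd_imp_le insertCI le_antisym neg_le_iff_le of_nat_le_iff dvd_refl)
    have total: "sum a S + a x \<le> c * C" using insert.prems(4) x_new insert.hyps(1) by simp
    obtain g where g_lt: "\<forall>i\<in>S. g i < c" and g_load: "\<forall>j<c. sum a {i\<in>S. g i = j} \<le> C"
      using insert.IH insert.prems total by auto
    define L where "L j = sum a {i\<in>S. g i = j}" for j
    have "(\<Sum>j<c. L j) = sum a S"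
      unfolding L_def using insert.hyps(1) g_lt by (subst sum.group[symmetric, where g = g]) auto
    moreover have "a x dvd L j" for j unfolding L_def by (rule dvd_sum) (use ax_dvd in auto)
    ultimately obtain j0 where j0: "j0 < c" "L j0 + a x \<le> C"
      using bin_with_room_exists[of "a x" C c L] ax_pos ax_dvd_C g_load total
      unfolding L_def by auto
    define g' where "g' = g(x := j0)"
    have "sum a {i\<in>insert x S. g' i = j} \<le> C" if "j < c" for j
    proof (cases "j = j0")
      case True
      then have "{i\<in>insert x S. g' i = j} = insert x {i\<in>S. g i = j}"
        using x_new unfolding g'_def by auto
      then show ?thesis using j0 True x_new insert.hyps(1) unfolding L_def by simp
    next
      case False
      then have "{i\<in>insert x S. g' i = j} = {i\<in>S. g i = j}"
        using x_new unfolding g'_def by auto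
      then show ?thesis using g_load that by simp
    qed
    moreover have "\<forall>i\<in>insert x S. g' i < c" using g_lt j0 x_new unfolding g'_def by auto
    ultimately show ?thesis by blast
  qed
qed

lemma inverse_power_packing:
  fixes r :: nat and k :: "'a \<Rightarrow> nat"
  assumes "1 \<le> r" and "finite S" and "\<forall>i\<in>S. 1 \<le> k i"
    and "(\<Sum>i\<in>S. inverse (real r) ^ k i) \<le> 1"
  obtains g where "\<forall>i\<in>S. g i < r"
    and "\<forall>j<r. (\<Sum>i\<in>{i\<in>S. g i = j}. inverse (real r) ^ k i) \<le> inverse (real r)"
proof -
  define D where "D = (\<Sum>i\<in>S. k i)"
  have k_le: "k i \<le> D" if "i \<in> S" for i
    unfolding D_def using assms(2) that by (intro member_le_sum) auto
  text \<open>Scaled by r^(D+1), the weights become integers forming a divisibility chain.\<close>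
  define a where "a i = r ^ (Suc D - k i)" for i
  have a_real: "inverse (real r) ^ k i = real (a i) / real r ^ Suc D" if "i \<in> S" for i
  proof -
    have "real (a i) = real r ^ Suc D / real r ^ k i"
      unfolding a_def of_nat_power using k_le[OF that] assms(1) by (simp add: power_diff)
    then show ?thesis using assms(1) by (simp add: field_simps power_inverse)
  qed
  have "real (sum a S) = real r ^ Suc D * (\<Sum>i\<in>S. inverse (real r) ^ k i)"
    using a_real assms(1) by (simp add: sum_distrib_left)
  also have "\<dots> \<le> real r ^ Suc D"
    using assms(4) by (simp add: mult_left_le)
  finally have "sum a S \<le> r * r ^ D"
    by (metis of_nat_le_iff of_nat_power power_Suc)
  moreover have "\<forall>i\<in>S. a i dvd r ^ D"
    using assms(3) unfolding a_def by (metis Suc_le_eq diff_le_mono2 diff_Suc_1 le_imp_power_dvd)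
  moreover have "\<forall>i\<in>S. \<forall>j\<in>S. a i dvd a j \<or> a j dvd a i"
    unfolding a_def by (metis le_imp_power_dvd nat_le_linear)
  moreover have "\<forall>i\<in>S. 0 < a i"
    using assms(1) by (simp add: a_def)
  ultimately obtain g where g_lt: "\<forall>i\<in>S. g i < r"
    and g_load: "\<forall>j<r. sum a {i\<in>S. g i = j} \<le> r ^ D"
    using bin_packing_dvd_chain[OF assms(2)] by blast
  have "(\<Sum>i\<in>{i\<in>S. g i = j}. inverse (real r) ^ k i) \<le> inverse (real r)" if "j < r" for j
  proof -
    have "(\<Sum>i\<in>{i\<in>S. g i = j}. inverse (real r) ^ k i)
        = real (sum a {i\<in>S. g i = j}) / real r ^ Suc D"
      using a_real by (simp add: sum_divide_distrib)
    also have "\<dots> \<le> real r ^ D / real r ^ Suc D"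
      using g_load that by (intro divide_right_mono) (simp_all flip: of_nat_power of_nat_sum)
    also have "\<dots> = inverse (real r)"
      using assms(1) by (simp add: divide_inverse)
    finally show ?thesis .
  qed
  with g_lt that show ?thesis by blast
qed

lemma supp_uminus [simp]: "supp (\<lambda>i. - x i) = supp x"
  by (simp add: supp_def)

lemma supp_unitvec [simp]: "supp (unitvec n) = {n}"
  by (auto simp: supp_def unitvec_def)

lemma supp_sum_list_subset: "supp (\<lambda>i. \<Sum>y\<leftarrow>ys. y i) \<subseteq> (\<Union>y\<in>set ys. supp y)"
  by (induction ys) (auto simp: supp_def)

lemma disjoint_supps_Cons:
  "disjoint_supps (y # ys) \<longleftrightarrow> disjoint_supps ys \<and> (\<forall>z\<in>set ys. supp y \<inter> supp z = {})"
proof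
  assume H: "disjoint_supps (y # ys)"
  show "disjoint_supps ys \<and> (\<forall>z\<in>set ys. supp y \<inter> supp z = {})"
    unfolding disjoint_supps_def
  proof (intro conjI allI impI ballI)
    fix i j assume "i < length ys" "j < length ys" "i \<noteq> j"
    then show "supp (ys ! i) \<inter> supp (ys ! j) = {}"
      using H[unfolded disjoint_supps_def, rule_format, of "Suc i" "Suc j"] by simp
  next
    fix z assume "z \<in> set ys"
    then obtain j where "j < length ys" "z = ys ! j" by (auto simp: in_set_conv_nth)
    then show "supp y \<inter> supp z = {}"
      using H[unfolded disjoint_supps_def, rule_format, of 0 "Suc j"] by simp
  qed
next
  assume H: "disjoint_supps ys \<and> (\<forall>z\<in>set ys. supp y \<inter> supp z = {})"
  show "disjoint_supps (y # ys)"
    unfolding disjoint_supps_def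
  proof (intro allI impI)
    fix i j assume "i < length (y # ys)" "j < length (y # ys)" "i \<noteq> j"
    with H show "supp ((y # ys) ! i) \<inter> supp ((y # ys) ! j) = {}"
      by (cases i; cases j) (force simp: disjoint_supps_def)+
  qed
qed

lemma sum_list_disjoint_supps_cases:
  assumes "disjoint_supps ys"
  shows "(\<Sum>y\<leftarrow>ys. y i) = 0 \<or> (\<exists>y\<in>set ys. (\<Sum>y\<leftarrow>ys. y i) = y i)"
  using assms
proof (induction ys)
  case (Cons y ys)
  show ?case
  proof (cases "y i = 0")
    case True
    with Cons show ?thesis by (auto simp: disjoint_supps_Cons)
  next
    case False
    then have "\<forall>z\<in>set ys. z i = 0"
      using Cons.prems by (auto simp: disjoint_supps_Cons supp_def)
    then have "(\<Sum>z\<leftarrow>ys. z i) = 0" by (induction ys) auto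
    then show ?thesis by simp
  qed
qed simp

lemma sum_list_upt_if_eq:
  "(\<Sum>j\<leftarrow>[0..<c]. if g i = j then v else 0) = (if g i < c then v else (0::'a::comm_monoid_add))"
  by (simp add: interv_sum_list_conv_sum_set_nat sum.delta')

definition lq_mass :: "real \<Rightarrow> (nat \<Rightarrow> real) \<Rightarrow> real" where
  "lq_mass q x = (\<Sum>i\<in>supp x. \<bar>x i\<bar> powr q)"

lemma lq_mass_nonneg: "0 \<le> lq_mass q x"
  unfolding lq_mass_def by (simp add: sum_nonneg)

lemma lq_mass_eq_sum_superset:
  assumes "finite A" and "supp x \<subseteq> A"
  shows "lq_mass q x = (\<Sum>i\<in>A. \<bar>x i\<bar> powr q)"
  unfolding lq_mass_def using assms by (intro sum.mono_neutral_left) (auto simp: supp_def)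

lemma lq_norm_le_1_iff:
  assumes "0 < q"
  shows "lq_norm q x \<le> 1 \<longleftrightarrow> lq_mass q x \<le> 1"
proof -
  have "lq_norm q x = lq_mass q x powr (1 / q)"
    by (simp add: lq_norm_def lq_mass_def)
  moreover have "1 < lq_mass q x powr (1 / q)" if "1 < lq_mass q x"
    using that assms by simp
  moreover have "lq_mass q x powr (1 / q) \<le> 1" if "lq_mass q x \<le> 1"
    using that assms lq_mass_nonneg[of q x] by (intro powr_le1) auto
  ultimately show ?thesis by (metis not_le)
qed

lemma mem_Nset_q_iff:
  assumes "0 < q"
  shows "x \<in> Nset_q t q \<longleftrightarrow> finite (supp x) \<and> (\<forall>i. x i \<in> Cset t) \<and> lq_mass q x \<le> 1"
  using lq_norm_le_1_iff[OF assms] by (auto simp: Nset_q_def Nset_def c00_def)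

lemma abs_le_1_if_lq_mass_le_1:
  assumes "0 < q" and "finite (supp x)" and "lq_mass q x \<le> 1"
  shows "\<bar>x i\<bar> \<le> 1"
proof (rule ccontr)
  assume "\<not> \<bar>x i\<bar> \<le> 1"
  then have "i \<in> supp x" and "1 < \<bar>x i\<bar> powr q" using assms(1) by (auto simp: supp_def)
  moreover have "\<bar>x i\<bar> powr q \<le> lq_mass q x"
    unfolding lq_mass_def using assms(2) \<open>i \<in> supp x\<close> by (intro member_le_sum) auto
  ultimately show False using assms(3) by simp
qed

lemma lq_mass_scale: "lq_mass q (\<lambda>i. c * x i) = \<bar>c\<bar> powr q * lq_mass q x"
proof (cases "c = 0")
  case False
  then have "supp (\<lambda>i. c * x i) = supp x" by (auto simp: supp_def)
  then show ?thesis by (simp add: lq_mass_def abs_mult powr_mult sum_distrib_left)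
qed (simp add: lq_mass_def supp_def)

lemma lq_mass_add_disjoint:
  assumes "finite (supp x)" and "finite (supp y)" and "supp x \<inter> supp y = {}"
  shows "lq_mass q (\<lambda>i. x i + y i) = lq_mass q x + lq_mass q y"
proof -
  have "lq_mass q (\<lambda>i. x i + y i) = (\<Sum>i\<in>supp x \<union> supp y. \<bar>x i + y i\<bar> powr q)"
    using assms by (intro lq_mass_eq_sum_superset) (auto simp: supp_def)
  also have "\<dots> = (\<Sum>i\<in>supp x. \<bar>x i + y i\<bar> powr q) + (\<Sum>i\<in>supp y. \<bar>x i + y i\<bar> powr q)"
    using assms by (intro sum.union_disjoint) auto
  also have "\<dots> = lq_mass q x + lq_mass q y"
    unfolding lq_mass_def using assms(3)
    by (intro arg_cong2[where f = "(+)"] sum.cong) (auto simp: supp_def disjoint_iff, force)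
  finally show ?thesis .
qed

lemma lq_mass_sum_list_disjoint:
  assumes "disjoint_supps ys" and "\<forall>y\<in>set ys. finite (supp y)"
  shows "lq_mass q (\<lambda>i. \<Sum>y\<leftarrow>ys. y i) = (\<Sum>y\<leftarrow>ys. lq_mass q y)"
  using assms
proof (induction ys)
  case Nil
  then show ?case by (simp add: lq_mass_def supp_def)
next
  case (Cons y ys)
  have "supp (\<lambda>i. \<Sum>z\<leftarrow>ys. z i) \<subseteq> (\<Union>z\<in>set ys. supp z)" by (rule supp_sum_list_subset)
  moreover have "finite (\<Union>z\<in>set ys. supp z)" and "supp y \<inter> (\<Union>z\<in>set ys. supp z) = {}"
    using Cons.prems by (auto simp: disjoint_supps_Cons)
  ultimately have "lq_mass q (\<lambda>i. y i + (\<Sum>z\<leftarrow>ys. z i))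
      = lq_mass q y + lq_mass q (\<lambda>i. \<Sum>z\<leftarrow>ys. z i)"
    using Cons.prems by (intro lq_mass_add_disjoint) (auto dest: finite_subset)
  with Cons show ?case by (simp add: disjoint_supps_Cons)
qed

lemma zero_in_Cset [simp]: "0 \<in> Cset t"
  by (simp add: Cset_def)

lemma one_in_Cset [simp]: "1 \<in> Cset t" and minus_one_in_Cset [simp]: "-1 \<in> Cset t"
  unfolding Cset_def by (auto intro!: exI[of _ 0])

lemma Cset_mult_powi:
  assumes "t \<noteq> 0" and "v \<in> Cset t"
  shows "t powi k * v \<in> Cset t"
proof -
  have "t powi k * t powi j = t powi (k + j)" for j
    using assms(1) by (simp add: power_int_add)
  with assms(2) show ?thesis
    unfolding Cset_def by auto
qed

lemma Cset_le_1_imp_inverse_power: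
  assumes "1 \<le> t" and "v \<in> Cset t" and "v \<noteq> 0" and "\<bar>v\<bar> \<le> 1"
  obtains k :: nat where "\<bar>v\<bar> = inverse t ^ k"
proof -
  obtain j :: int where j: "\<bar>v\<bar> = t powi j"
    using assms(1-3) unfolding Cset_def by auto
  show ?thesis
  proof (cases "j \<le> 0")
    case True
    then have "t powi j = inverse t ^ nat (- j)"
      by (simp add: power_int_def)
    with j that show ?thesis by simp
  next
    case False
    then have "1 \<le> t powi j"
      using assms(1) by (simp add: power_int_def)
    with j assms(4) have "\<bar>v\<bar> = inverse t ^ 0" by simp
    with that show ?thesis .
  qed
qed

lemma inverse_root_power_powr:
  fixes x q :: real
  assumes "0 < x" and "q \<noteq> 0"
  shows "(inverse (x powr (1 / q)) ^ k) powr q = inverse x ^ k"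
proof -
  have "(inverse (x powr (1 / q)) ^ k) powr q = inverse (((x powr (1 / q)) ^ k) powr q)"
    by (simp add: power_inverse inverse_powr)
  also have "((x powr (1 / q)) ^ k) powr q = x powr real k"
    using assms by (simp add: powr_power powr_powr)
  also have "inverse (x powr real k) = inverse x ^ k"
    using assms(1) by (simp add: powr_realpow power_inverse)
  finally show ?thesis .
qed

lemma KM_zero: "(\<lambda>i. 0) \<in> KM q r"
  using KM.comb[of "[]" q r] by (simp add: disjoint_supps_def)

lemma KM_if_unit_entry:
  assumes "0 < q" and "finite (supp x)" and "lq_mass q x \<le> 1" and "\<bar>x n\<bar> = 1"
  shows "x \<in> KM q r"
proof -
  have off_n: "x i = 0" if "i \<noteq> n" for i
  proof (rule ccontr)
    assume "x i \<noteq> 0"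
    then have "(\<Sum>k\<in>{n, i}. \<bar>x k\<bar> powr q) \<le> lq_mass q x"
      unfolding lq_mass_def using assms(2,4) by (intro sum_mono2) (auto simp: supp_def)
    moreover have "(\<Sum>k\<in>{n, i}. \<bar>x k\<bar> powr q) = 1 + \<bar>x i\<bar> powr q"
      using that assms(4) by simp
    moreover have "0 < \<bar>x i\<bar> powr q" using \<open>x i \<noteq> 0\<close> by simp
    ultimately show False using assms(3) by simp
  qed
  moreover have "x n = 1 \<or> x n = -1" using assms(4) by auto
  ultimately have "x = unitvec n \<or> x = (\<lambda>i. - unitvec n i)"
    by (auto simp: unitvec_def fun_eq_iff)
  then show ?thesis by (auto intro: KM.intros)
qed

lemma KM_subset_Nset_q:
  assumes "1 \<le> r" and "0 < q"
  shows "KM q r \<subseteq> Nset_q (real r powr (1 / q)) q"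
proof
  define t where "t = real r powr (1 / q)"
  have t_pos: "0 < t" using assms(1) by (simp add: t_def)
  fix x assume "x \<in> KM q r"
  then show "x \<in> Nset_q (real r powr (1 / q)) q"
    unfolding t_def[symmetric]
  proof (induction rule: KM.induct)
    case (pos_unit n)
    then show ?case using assms(2) by (simp add: mem_Nset_q_iff lq_mass_def) (simp add: unitvec_def)
  next
    case (neg_unit n)
    then show ?case using assms(2) by (simp add: mem_Nset_q_iff lq_mass_def) (simp add: unitvec_def)
  next
    case (comb ys)
    define s where "s i = (\<Sum>y\<leftarrow>ys. y i)" for i
    have ys: "finite (supp y)" "\<forall>i. y i \<in> Cset t" "lq_mass q y \<le> 1" if "y \<in> set ys" for y
      using comb.IH that assms(2) by (auto simp: mem_Nset_q_iff)
    have u: "real r powr (-1 / q) = t powi -1"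
      by (simp add: t_def powr_minus)
    have "supp (\<lambda>i. t powi -1 * s i) \<subseteq> supp s" by (auto simp: supp_def)
    moreover have "supp s \<subseteq> (\<Union>y\<in>set ys. supp y)"
      unfolding s_def by (rule supp_sum_list_subset)
    ultimately have "finite (supp (\<lambda>i. t powi -1 * s i))"
      using ys(1) by (auto dest: finite_subset)
    moreover have "t powi -1 * s i \<in> Cset t" for i
    proof -
      have "s i \<in> Cset t"
        using sum_list_disjoint_supps_cases[OF \<open>disjoint_supps ys\<close>, of i] ys(2)
        unfolding s_def by auto
      then show ?thesis using t_pos by (intro Cset_mult_powi) auto
    qed
    moreover have "lq_mass q (\<lambda>i. t powi -1 * s i) \<le> 1"
    proof -
      have "\<bar>t powi -1\<bar> powr q = inverse (real r)"
        using inverse_root_power_powr[of "real r" q 1] assms t_pos by (simp add: t_def)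
      moreover have "lq_mass q s = (\<Sum>y\<leftarrow>ys. lq_mass q y)"
        unfolding s_def using \<open>disjoint_supps ys\<close> ys(1) by (intro lq_mass_sum_list_disjoint) auto
      ultimately have "lq_mass q (\<lambda>i. t powi -1 * s i) = inverse (real r) * (\<Sum>y\<leftarrow>ys. lq_mass q y)"
        by (simp only: lq_mass_scale)
      also have "\<dots> \<le> inverse (real r) * real r"
        using sum_list_mono[of ys "lq_mass q" "\<lambda>_. 1"] ys(3) \<open>length ys \<le> r\<close>
        by (intro mult_left_mono) (simp_all add: sum_list_triv)
      also have "\<dots> = 1" using assms(1) by simp
      finally show ?thesis .
    qed
    ultimately show ?case
      unfolding u mem_Nset_q_iff[OF assms(2)] s_def[symmetric] by blast
  qed
qed

lemma supp_if: "supp (\<lambda>i. if P i then x i else 0) = {i\<in>supp x. P i}"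
  by (auto simp: supp_def)

lemma exists_colouring_lq_mass_le:
  fixes r :: nat and q :: real
  defines "t \<equiv> real r powr (1 / q)"
  assumes "1 \<le> r" and "0 < q" and "finite (supp x)" and "lq_mass q x \<le> 1"
    and "\<forall>i\<in>supp x. \<exists>k\<ge>1. \<bar>x i\<bar> = inverse t ^ k"
  obtains g where "\<forall>i\<in>supp x. g i < r"
    and "\<forall>j<r. lq_mass q (\<lambda>i. if g i = j then x i else 0) \<le> inverse (real r)"
proof -
  obtain k where k: "\<forall>i\<in>supp x. 1 \<le> k i \<and> \<bar>x i\<bar> = inverse t ^ k i"
    using bchoice[OF assms(6)] by blast
  have weight: "\<bar>x i\<bar> powr q = inverse (real r) ^ k i" if "i \<in> supp x" for i
    using k that assms(2,3) by (simp add: t_def inverse_root_power_powr)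
  have "(\<Sum>i\<in>supp x. inverse (real r) ^ k i) \<le> 1"
    using assms(5) weight unfolding lq_mass_def by simp
  moreover have "\<forall>i\<in>supp x. 1 \<le> k i" using k by blast
  ultimately obtain g where g_lt: "\<forall>i\<in>supp x. g i < r"
    and g_load: "\<forall>j<r. (\<Sum>i\<in>{i\<in>supp x. g i = j}. inverse (real r) ^ k i) \<le> inverse (real r)"
    using inverse_power_packing[OF assms(2,4)] by blast
  have "lq_mass q (\<lambda>i. if g i = j then x i else 0)
      = (\<Sum>i\<in>{i\<in>supp x. g i = j}. inverse (real r) ^ k i)" for j
    unfolding lq_mass_def supp_if using weight by (intro sum.cong) auto
  with g_lt g_load that show ?thesis by simp
qed

lemma KM_if_rescaled_colour_classes:
  fixes r :: nat and q :: real
  defines "t \<equiv> real r powr (1 / q)"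
  assumes "1 \<le> r" and "\<forall>i\<in>supp x. g i < r"
    and "\<And>j. j < r \<Longrightarrow> (\<lambda>i. t * (if g i = j then x i else 0)) \<in> KM q r"
  shows "x \<in> KM q r"
proof -
  define ys where "ys = map (\<lambda>j i. t * (if g i = j then x i else 0)) [0..<r]"
  have "ys \<in> lists (KM q r)" using assms(4) by (auto simp: ys_def)
  moreover have "disjoint_supps ys" by (auto simp: ys_def disjoint_supps_def supp_def)
  ultimately have "(\<lambda>i. real r powr (-1 / q) * (\<Sum>y\<leftarrow>ys. y i)) \<in> KM q r"
    by (intro KM.comb) (auto simp: ys_def)
  moreover have "x = (\<lambda>i. real r powr (-1 / q) * (\<Sum>y\<leftarrow>ys. y i))"
  proof
    fix i
    have "(\<Sum>y\<leftarrow>ys. y i) = t * (if g i < r then x i else 0)"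
      by (simp add: ys_def comp_def sum_list_const_mult sum_list_upt_if_eq)
    moreover have "real r powr (-1 / q) * t = 1"
      using assms(2) by (simp add: t_def powr_minus)
    ultimately show "x i = real r powr (-1 / q) * (\<Sum>y\<leftarrow>ys. y i)"
      using assms(3) by (auto simp: supp_def)
  qed
  ultimately show ?thesis by simp
qed

lemma rescaled_class_exponents:
  assumes "0 < t" and "\<forall>i\<in>supp x. \<exists>k\<ge>1. k \<le> Suc D \<and> \<bar>x i\<bar> = inverse t ^ k"
  shows "\<forall>i\<in>supp (\<lambda>i. t * (if P i then x i else 0)).
    \<exists>m\<le>D. \<bar>t * (if P i then x i else 0)\<bar> = inverse t ^ m"
proof
  fix i assume "i \<in> supp (\<lambda>i. t * (if P i then x i else 0))"
  then have "i \<in> supp x" and "P i" by (auto simp: supp_def split: if_splits)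
  with assms(2) obtain k where "1 \<le> k" "k \<le> Suc D" "\<bar>x i\<bar> = inverse t ^ k" by blast
  then obtain m where "m \<le> D" "\<bar>x i\<bar> = inverse t ^ Suc m" by (cases k) auto
  moreover from this(2) have "\<bar>t * (if P i then x i else 0)\<bar> = inverse t ^ m"
    using \<open>P i\<close> assms(1) by (simp add: abs_mult)
  ultimately show "\<exists>m\<le>D. \<bar>t * (if P i then x i else 0)\<bar> = inverse t ^ m" by blast
qed

lemma KM_if_exponents_le:
  fixes r :: nat and q :: real
  defines "t \<equiv> real r powr (1 / q)"
  assumes "1 \<le> r" and "0 < q" and "finite (supp x)"
    and "\<forall>i\<in>supp x. \<exists>k\<le>D. \<bar>x i\<bar> = inverse t ^ k" and "lq_mass q x \<le> 1"
  shows "x \<in> KM q r"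
  using assms(4-6)
proof (induction D arbitrary: x)
  case 0
  show ?case
  proof (cases "supp x = {}")
    case True
    then have "x = (\<lambda>i. 0)" by (auto simp: supp_def)
    then show ?thesis using KM_zero by simp
  next
    case False
    then obtain n where "n \<in> supp x" by blast
    with 0 show ?thesis using assms(3) by (auto intro: KM_if_unit_entry)
  qed
next
  case (Suc D)
  show ?case
  proof (cases "\<exists>n. \<bar>x n\<bar> = 1")
    case True
    with Suc.prems assms(3) show ?thesis by (auto intro: KM_if_unit_entry)
  next
    case no_unit: False
    have t_pos: "0 < t" using assms(2) by (simp add: t_def)
    have exps: "\<forall>i\<in>supp x. \<exists>k\<ge>1. k \<le> Suc D \<and> \<bar>x i\<bar> = inverse t ^ k"
    proof
      fix i assume "i \<in> supp x"
      from bspec[OF Suc.prems(2) this]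
      obtain k where k: "k \<le> Suc D" "\<bar>x i\<bar> = inverse t ^ k" by blast
      have "k \<noteq> 0" using no_unit k(2) by (metis power_0)
      with k show "\<exists>k\<ge>1. k \<le> Suc D \<and> \<bar>x i\<bar> = inverse t ^ k" by (intro exI[of _ k]) simp
    qed
    then obtain g where g_lt: "\<forall>i\<in>supp x. g i < r"
      and g_mass: "\<forall>j<r. lq_mass q (\<lambda>i. if g i = j then x i else 0) \<le> inverse (real r)"
      using exists_colouring_lq_mass_le[OF assms(2,3) Suc.prems(1,3)] unfolding t_def by blast
    have "(\<lambda>i. t * (if g i = j then x i else 0)) \<in> KM q r" (is "?y \<in> _") if "j < r" for j
    proof -
      have supp_y: "supp ?y = {i\<in>supp x. g i = j}"
        using t_pos by (auto simp: supp_def)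
      show "?y \<in> KM q r"
      proof (rule Suc.IH)
        show "finite (supp ?y)" using Suc.prems(1) by (simp add: supp_y)
        show "\<forall>i\<in>supp ?y. \<exists>m\<le>D. \<bar>?y i\<bar> = inverse t ^ m"
          using t_pos exps by (rule rescaled_class_exponents)
        have "\<bar>t\<bar> powr q = real r"
          using t_pos assms(3) by (simp add: t_def powr_powr)
        then have "lq_mass q ?y = real r * lq_mass q (\<lambda>i. if g i = j then x i else 0)"
          by (simp only: lq_mass_scale)
        also have "\<dots> \<le> real r * inverse (real r)"
          using g_mass that by (intro mult_left_mono) auto
        also have "\<dots> = 1" using assms(2) by simp
        finally show "lq_mass q ?y \<le> 1" .
      qed
    qed
    then show ?thesis
      using KM_if_rescaled_colour_classes[OF assms(2) g_lt] unfolding t_def by blast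
  qed
qed

lemma Nset_q_subset_KM:
  assumes "1 \<le> r" and "0 < q"
  shows "Nset_q (real r powr (1 / q)) q \<subseteq> KM q r"
proof
  define t where "t = real r powr (1 / q)"
  have t_ge_1: "1 \<le> t" using assms by (simp add: t_def ge_one_powr_ge_zero)
  fix x assume "x \<in> Nset_q t q"
  then have fin: "finite (supp x)" and C: "\<And>i. x i \<in> Cset t" and mass: "lq_mass q x \<le> 1"
    using mem_Nset_q_iff[OF assms(2)] by auto
  have "\<exists>m. \<bar>x i\<bar> = inverse t ^ m" if "i \<in> supp x" for i
  proof -
    have "x i \<noteq> 0" using that by (simp add: supp_def)
    with t_ge_1 C abs_le_1_if_lq_mass_le_1[OF assms(2) fin mass] show ?thesis
      by (metis Cset_le_1_imp_inverse_power)
  qed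
  then obtain k where "\<forall>i\<in>supp x. \<bar>x i\<bar> = inverse t ^ k i" by metis
  with fin have "\<forall>i\<in>supp x. \<exists>m\<le>Max (k ` supp x). \<bar>x i\<bar> = inverse t ^ m"
    by (auto intro!: Max_ge)
  with KM_if_exponents_le[OF assms fin] mass show "x \<in> KM q r" by (simp add: t_def)
qed

theorem mainTheorem2:
  fixes r :: nat and q :: real
  assumes "1 \<le> r" and "1 < q"
  shows "KM q r = Nset_q (real r powr (1 / q)) q"
proof -
  have "0 < q" using assms(2) by simp
  with assms(1) show ?thesis by (intro equalityI KM_subset_Nset_q Nset_q_subset_KM)
qed

end
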